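(* Let $P$ be a locally finite poset, $R$ a commutative unital ring, and $n\ge 3$. Then $I^n(P,R)$ is not third power associative (i.e. there exists $f\in I^n(P,R)$ with $f(ff)\ne (ff)f$), unless $P$ is an antichain.
   Context: For a poset $P$ and $n\ge 2$, $P^n_\le=\{(x_1,\dots,x_n)\in P^n: x_1\le\dots\le x_n\}$. For $\mathbf{x}=(x_1,\dots,x_n)\in P^n_\le$, $\mathcal{I}(\mathbf{x})=[x_1,x_2]\times\dots\times[x_{n-1},x_n]\subseteq P^{n-1}_\le$, where $[a,b]=\{c\in P: a\le c\le b\}$. The $n$-th partial flag incidence algebra $I^n(P,R)$ is the $R$-module of functions $f:P^n_\le\to R$ with multiplication $(fg)(\mathbf{x})=\sum_{\mathbf{y}\in\mathcal{I}(\mathbf{x})}f(x_1,\mathbf{y})g(\mathbf{y},x_n)$. *)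

theory Defs
  imports Main
begin

text \<open>A poset is modelled as a type of class order. Elements of P^n_le are
lists of length n that are weakly increasing.\<close>

definition locally_finite :: "'a::order itself \<Rightarrow> bool" where
  "locally_finite _ \<longleftrightarrow> (\<forall>a b::'a. finite {c. a \<le> c \<and> c \<le> b})"

definition is_antichain :: "'a::order itself \<Rightarrow> bool" where
  "is_antichain _ \<longleftrightarrow> (\<forall>a b::'a. a \<le> b \<longrightarrow> a = b)"

definition flags :: "nat \<Rightarrow> ('a::order) list set" where
  "flags n = {xs. length xs = n \<and> sorted_wrt (\<le>) xs}"

definition Icube :: "('a::order) list \<Rightarrow> 'a list set" where
  "Icube xs = {ys. length ys = length xs - 1 \<and>
     (\<forall>i < length ys. xs ! i \<le> ys ! i \<and> ys ! i \<le> xs ! Suc i)}"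

definition pfia :: "nat \<Rightarrow> (('a::order) list \<Rightarrow> 'r::comm_ring_1) set" where
  "pfia n = {f. \<forall>xs. xs \<notin> flags n \<longrightarrow> f xs = 0}"

definition pf_mult :: "nat \<Rightarrow> (('a::order) list \<Rightarrow> 'r::comm_ring_1) \<Rightarrow> ('a list \<Rightarrow> 'r) \<Rightarrow> 'a list \<Rightarrow> 'r" where
  "pf_mult n f g = (\<lambda>xs. if xs \<in> flags n
      then (\<Sum>ys\<in>Icube xs. f (hd xs # ys) * g (ys @ [last xs])) else 0)"

end

theory Submission
  imports Defs
begin

(* On an antichain every flag is constant and every cube I(x) is a single point, so the product
   is pointwise and hence associative.  Otherwise pick a < b and consider the step flags
   s_k = (a,...,a,b,...,b) with k copies of a.  For 0 < k < n the cube of s_k is [a,b] placed in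
   slot k, so if f or g vanishes off {a,b}-valued lists, only the two ends of [a,b] contribute:
   (f g)(s_k) = f(s_(k+1)) g(s_k) + f(s_k) g(s_(k-1)).  For f the indicator of the {a,b}-valued
   flags starting with a, this gives (f f)(s_0, s_1, s_2) = (0, 1, 2) and then
   (f (f f))(s_1) = 1 but ((f f) f)(s_1) = 2; evaluating at s_2 is where n >= 3 is needed. *)

lemma locally_finite_finite_atLeastAtMost:
  assumes "locally_finite TYPE('a::order)"
  shows "finite {a..b::'a}"
  using assms by (simp add: locally_finite_def atLeastAtMost_def atLeast_def atMost_def Int_def)

lemma sorted_wrt_le_replicate [simp]: "sorted_wrt (\<le>) (replicate n (x::'a::order))"
  by (induction n) auto

lemma replicate_append_in_flags:
  assumes "a \<le> b"
  shows "replicate i a @ replicate j b \<in> flags (i + j)"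
  using assms by (auto simp: flags_def sorted_wrt_append)

lemma Icube_replicate: "Icube (replicate (Suc m) x) = {replicate m x}"
proof (intro equalityI subsetI)
  fix ys assume "ys \<in> Icube (replicate (Suc m) x)"
  then have "length ys = m" and "\<And>k. k < m \<Longrightarrow> ys ! k = x"
    by (auto simp: Icube_def simp del: replicate_Suc intro: antisym)
  then show "ys \<in> {replicate m x}"
    by (auto intro!: replicate_eqI simp: in_set_conv_nth)
qed (auto simp: Icube_def simp del: replicate_Suc)

lemma nth_replicate_append:
  "k < m + l \<Longrightarrow> (replicate m a @ replicate l b) ! k = (if k < m then a else b)"
  by (simp add: nth_append)

lemma Icube_replicate_append:
  "Icube (replicate (Suc i) a @ replicate (Suc j) b) = (\<lambda>c. replicate i a @ c # replicate j b) ` {a..b}"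
proof (intro equalityI subsetI)
  fix ys assume "ys \<in> Icube (replicate (Suc i) a @ replicate (Suc j) b)"
  then have len: "length ys = i + j + 1" and cube: "\<forall>k < i + j + 1.
      (replicate (Suc i) a @ replicate (Suc j) b) ! k \<le> ys ! k \<and>
      ys ! k \<le> (replicate (Suc i) a @ replicate (Suc j) b) ! Suc k"
    by (simp_all add: Icube_def del: replicate_Suc)
  have bounds: "(if k \<le> i then a else b) \<le> ys ! k \<and> ys ! k \<le> (if k < i then a else b)"
    if "k < i + j + 1" for k
    using cube that by (auto simp: nth_replicate_append simp del: replicate_Suc)
  have nth_ys: "ys ! k = (replicate i a @ ys ! i # replicate j b) ! k" if "k < i + j + 1" for k
  proof (cases k i rule: linorder_cases)
    case less
    then show ?thesis
      using bounds[OF that] by (simp add: nth_append order.antisym)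
  next
    case greater
    then show ?thesis
      using bounds[OF that] that by (simp add: nth_append order.antisym)
  qed (simp add: nth_append)
  have "ys = replicate i a @ ys ! i # replicate j b"
  proof (rule nth_equalityI)
    fix k assume "k < length ys"
    with len show "ys ! k = (replicate i a @ ys ! i # replicate j b) ! k"
      by (intro nth_ys) simp
  qed (simp add: len)
  moreover have "ys ! i \<in> {a..b}"
    using bounds[of i] by auto
  ultimately show "ys \<in> (\<lambda>c. replicate i a @ c # replicate j b) ` {a..b}"
    by blast
next
  fix ys assume "ys \<in> (\<lambda>c. replicate i a @ c # replicate j b) ` {a..b}"
  then show "ys \<in> Icube (replicate (Suc i) a @ replicate (Suc j) b)"
    by (auto simp: Icube_def nth_append nth_Cons' simp del: replicate_Suc)
qed

lemma pf_mult_replicate: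
  "pf_mult (Suc m) f g (replicate (Suc m) x) = f (replicate (Suc m) x) * g (replicate (Suc m) x)"
proof -
  have "replicate (Suc m) x \<in> flags (Suc m)"
    using replicate_append_in_flags[of x x "Suc m" 0] by simp
  then show ?thesis
    by (simp add: pf_mult_def Icube_replicate del: replicate_Suc) (simp add: replicate_append_same)
qed

lemma antichain_flag_eq_replicate:
  assumes "is_antichain TYPE('a::order)" and "(xs::'a list) \<in> flags n"
  shows "xs = replicate n (hd xs)"
proof (cases xs)
  case (Cons x xs')
  with assms have "y = x" if "y \<in> set xs'" for y
    using that by (auto simp: is_antichain_def flags_def)
  with Cons assms(2) show ?thesis
    by (auto simp: flags_def intro!: replicate_eqI)
qed (use assms(2) in \<open>simp add: flags_def\<close>)

lemma pf_mult_antichain: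
  assumes "is_antichain TYPE('a::order)" and "0 < n"
  shows "pf_mult n f g (xs::'a list) = (if xs \<in> flags n then f xs * g xs else 0)"
proof (cases "xs \<in> flags n")
  case True
  obtain m where "n = Suc m"
    using \<open>0 < n\<close> gr0_implies_Suc by blast
  with True show ?thesis
    using antichain_flag_eq_replicate[OF assms(1) True] pf_mult_replicate by metis
qed (simp add: pf_mult_def)

lemma pf_mult_assoc_antichain:
  assumes "is_antichain TYPE('a::order)" and "0 < n"
  shows "pf_mult n f (pf_mult n g h) = pf_mult n (pf_mult n f g) (h :: 'a list \<Rightarrow> 'r::comm_ring_1)"
  by (simp add: fun_eq_iff pf_mult_antichain[OF assms] mult.assoc)

lemma pf_mult_replicate_append:
  assumes "a \<le> b" and "n = i + j + 2"
  shows "pf_mult n f g (replicate (Suc i) a @ replicate (Suc j) b) =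
    (\<Sum>c\<in>{a..b}. f (replicate (Suc i) a @ c # replicate j b) * g (replicate i a @ c # replicate (Suc j) b))"
proof -
  have "replicate (Suc i) a @ replicate (Suc j) b \<in> flags n"
    using replicate_append_in_flags[OF assms(1), of "Suc i" "Suc j"] assms(2) by simp
  moreover have "inj_on (\<lambda>c. replicate i a @ c # replicate j b) {a..b}"
    by (rule inj_onI) simp
  ultimately show ?thesis
    by (simp add: pf_mult_def Icube_replicate_append sum.reindex del: replicate_Suc)
      (simp add: replicate_append_same)
qed

definition step_flag :: "'a \<Rightarrow> 'a \<Rightarrow> nat \<Rightarrow> nat \<Rightarrow> 'a list" where
  "step_flag a b n k = replicate k a @ replicate (n - k) b"

lemma pf_mult_step_flag:
  assumes "locally_finite TYPE('a::order)" and "a < (b::'a)" and "0 < k" and "k < n"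
    and "(\<forall>xs. f xs \<noteq> 0 \<longrightarrow> set xs \<subseteq> {a, b}) \<or> (\<forall>xs. g xs \<noteq> 0 \<longrightarrow> set xs \<subseteq> {a, b})"
  shows "pf_mult n f g (step_flag a b n k) =
    f (step_flag a b n (Suc k)) * g (step_flag a b n k) + f (step_flag a b n k) * g (step_flag a b n (k - 1))"
proof -
  obtain i j where k: "k = Suc i" and n: "n = i + j + 2"
    using assms(3,4) by (intro that[of "k - 1" "n - k - 1"]) auto
  define F where "F c = f (replicate (Suc i) a @ c # replicate j b) * g (replicate i a @ c # replicate (Suc j) b)" for c
  have "F c = 0" if "c \<notin> {a, b}" for c
  proof -
    have "\<not> set (replicate (Suc i) a @ c # replicate j b) \<subseteq> {a, b}"
      and "\<not> set (replicate i a @ c # replicate (Suc j) b) \<subseteq> {a, b}"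
      using that by auto
    with assms(5) show ?thesis
      unfolding F_def by (metis mult_zero_left mult_zero_right)
  qed
  then have "(\<Sum>c\<in>{a..b}. F c) = (\<Sum>c\<in>{a, b}. F c)"
    using assms(2) locally_finite_finite_atLeastAtMost[OF assms(1)]
    by (intro sum.mono_neutral_right) auto
  moreover have "pf_mult n f g (step_flag a b n k) = (\<Sum>c\<in>{a..b}. F c)"
    unfolding F_def step_flag_def using assms(2) k n
    by (simp add: pf_mult_replicate_append del: replicate_Suc)
  moreover have "F a = f (step_flag a b n (Suc k)) * g (step_flag a b n k)"
    using k n by (simp add: F_def step_flag_def replicate_app_Cons_same)
  moreover have "F b = f (step_flag a b n k) * g (step_flag a b n (k - 1))"
    using k n by (simp add: F_def step_flag_def)
  ultimately show ?thesis
    using assms(2) by simp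
qed

lemma pfia_not_third_power_associative:
  fixes a b :: "'a::order"
  assumes lf: "locally_finite TYPE('a)" and "a < b" and "3 \<le> n"
  shows "\<exists>f \<in> pfia n. pf_mult n f (pf_mult n f f) \<noteq> pf_mult n (pf_mult n f f) (f :: 'a list \<Rightarrow> 'r::comm_ring_1)"
proof -
  define f :: "'a list \<Rightarrow> 'r" where
    "f xs = (if xs \<in> flags n \<and> set xs \<subseteq> {a, b} \<and> hd xs = a then 1 else 0)" for xs
  have "f \<in> pfia n"
    by (simp add: pfia_def f_def)
  have supp: "\<forall>xs. f xs \<noteq> 0 \<longrightarrow> set xs \<subseteq> {a, b}"
    by (simp add: f_def)
  have f_step_flag: "f (step_flag a b n k) = (if k = 0 then 0 else 1)" if "k \<le> n" for k
    using that assms(2,3) replicate_append_in_flags[of a b k "n - k"]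
    by (cases k) (auto simp: f_def step_flag_def)
  have "f (b # ys) = 0" for ys
    using assms(2) by (auto simp: f_def)
  then have "pf_mult n f f (step_flag a b n 0) = 0"
    using assms(3) by (simp add: pf_mult_def step_flag_def)
  moreover have "pf_mult n f f (step_flag a b n 1) = 1"
    using pf_mult_step_flag[OF lf \<open>a < b\<close>, of 1 n f f] supp f_step_flag assms(3) by simp
  moreover have "pf_mult n f f (step_flag a b n 2) = 2"
    using pf_mult_step_flag[OF lf \<open>a < b\<close>, of 2 n f f] supp f_step_flag assms(3) by simp
  ultimately have "pf_mult n f (pf_mult n f f) (step_flag a b n 1) = 1"
    and "pf_mult n (pf_mult n f f) f (step_flag a b n 1) = 2"
    using pf_mult_step_flag[OF lf \<open>a < b\<close>, of 1 n f "pf_mult n f f"]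
      pf_mult_step_flag[OF lf \<open>a < b\<close>, of 1 n "pf_mult n f f" f] supp f_step_flag assms(3)
    by (simp_all add: numeral_2_eq_2)
  moreover have "(1::'r) \<noteq> 2"
    by (metis add_cancel_left_right one_add_one zero_neq_one)
  ultimately show ?thesis
    using \<open>f \<in> pfia n\<close> by metis
qed

theorem corollary1p3:
  fixes n :: nat
  assumes "locally_finite TYPE('a::order)"
    and "n \<ge> 3"
  shows "(\<exists>f \<in> pfia n. pf_mult n f (pf_mult n f f) \<noteq> pf_mult n (pf_mult n f f) (f :: 'a list \<Rightarrow> 'r::comm_ring_1))
         \<longleftrightarrow> \<not> is_antichain TYPE('a)"
proof
  assume "\<exists>f \<in> pfia n. pf_mult n f (pf_mult n f f) \<noteq> pf_mult n (pf_mult n f f) (f :: 'a list \<Rightarrow> 'r)"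
  moreover have "0 < n"
    using assms(2) by simp
  ultimately show "\<not> is_antichain TYPE('a)"
    using pf_mult_assoc_antichain by blast
next
  assume "\<not> is_antichain TYPE('a)"
  then obtain a b :: 'a where "a < b"
    by (auto simp: is_antichain_def less_le)
  then show "\<exists>f \<in> pfia n. pf_mult n f (pf_mult n f f) \<noteq> pf_mult n (pf_mult n f f) (f :: 'a list \<Rightarrow> 'r)"
    using pfia_not_third_power_associative assms by blast
qed

end
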